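(* Let $X$ be a locally convex space and let $h\in\mathscr{C}$. Then $[h=c]\subset[h^{\square}=c]$. If, in addition, $h\in\mathscr{D}$, then $[h=c]=[h^{\square}=c]$.
   Context: $X$ is a non-trivial Hausdorff locally convex space with topology $\tau$, $X^*$ its dual with weak-star topology $\omega^*$, $Z=X\times X^*$ with topology $\tau\times\omega^*$, $c(x,x^* )=\langle x,x^*\rangle$. The dual of $Z$ is identified with $Z$ via $z\cdot z'=\langle x,x'^*\rangle+\langle x',x^*\rangle$, and $f^{\square}(z)=\sup\{z\cdot z'-f(z')\mid z'\in Z\}$. $[f=g]=\{z\mid f(z)=g(z)\}$. $\mathscr{C}$ is the class of proper convex $f:Z\to\overline{\mathbb R}$ with $f\ge c$; $\mathscr{R}$ those in $\mathscr{C}$ that are $\tau\times\omega^*$-lsc; $\mathscr{D}=\{f\in\mathscr{R}\mid f^{\square}\ge c\}$. *)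

theory Defs
  imports "HOL-Analysis.Analysis"
begin

definition lcs :: "'a::real_vector topology \<Rightarrow> bool" where
  "lcs T \<longleftrightarrow> topspace T = UNIV \<and> Hausdorff_space T
     \<and> continuous_map (prod_topology T T) T (\<lambda>(x,y). x + y)
     \<and> continuous_map (prod_topology euclideanreal T) T (\<lambda>(a,x). a *\<^sub>R x)
     \<and> (\<forall>U. openin T U \<and> 0 \<in> U \<longrightarrow> (\<exists>V. openin T V \<and> convex V \<and> 0 \<in> V \<and> V \<subseteq> U))"

definition dual :: "'a::real_vector topology \<Rightarrow> ('a \<Rightarrow> real) set" where
  "dual T = {f. linear f \<and> continuous_map T euclideanreal f}"

definition wstar :: "'a::real_vector topology \<Rightarrow> ('a \<Rightarrow> real) topology" where
  "wstar T = subtopology (product_topology (\<lambda>_. euclideanreal) UNIV) (dual T)"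

definition Zset :: "'a::real_vector topology \<Rightarrow> ('a \<times> ('a \<Rightarrow> real)) set" where
  "Zset T = UNIV \<times> dual T"

definition Ztop :: "'a::real_vector topology \<Rightarrow> ('a \<times> ('a \<Rightarrow> real)) topology" where
  "Ztop T = prod_topology T (wstar T)"

text \<open>Coupling c(x,x^*) = <x,x^*> and the pairing z\<cdot>z'.\<close>
definition cpl :: "'a \<times> ('a \<Rightarrow> real) \<Rightarrow> real" where
  "cpl z = snd z (fst z)"

definition zdot :: "'a \<times> ('a \<Rightarrow> real) \<Rightarrow> 'a \<times> ('a \<Rightarrow> real) \<Rightarrow> real" where
  "zdot z z' = snd z' (fst z) + snd z (fst z')"

definition zcomb :: "real \<Rightarrow> 'a::real_vector \<times> ('a \<Rightarrow> real) \<Rightarrow> 'a \<times> ('a \<Rightarrow> real) \<Rightarrow> 'a \<times> ('a \<Rightarrow> real)" where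
  "zcomb t z z' = (t *\<^sub>R fst z + (1 - t) *\<^sub>R fst z', \<lambda>y. t * snd z y + (1 - t) * snd z' y)"

definition sqconj :: "'a::real_vector topology \<Rightarrow> ('a \<times> ('a \<Rightarrow> real) \<Rightarrow> ereal) \<Rightarrow> 'a \<times> ('a \<Rightarrow> real) \<Rightarrow> ereal" where
  "sqconj T f z = (SUP z'\<in>Zset T. ereal (zdot z z') - f z')"

definition eqset :: "'a::real_vector topology \<Rightarrow> ('a \<times> ('a \<Rightarrow> real) \<Rightarrow> ereal) \<Rightarrow> ('a \<times> ('a \<Rightarrow> real) \<Rightarrow> ereal) \<Rightarrow> ('a \<times> ('a \<Rightarrow> real)) set" where
  "eqset T f g = {z \<in> Zset T. f z = g z}"

definition proper_on :: "'b set \<Rightarrow> ('b \<Rightarrow> ereal) \<Rightarrow> bool" where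
  "proper_on S f \<longleftrightarrow> (\<forall>z\<in>S. f z \<noteq> -\<infinity>) \<and> (\<exists>z\<in>S. f z \<noteq> \<infinity>)"

text \<open>Convexity on Z (for functions not taking -\<infinity>, this is convexity of the epigraph).\<close>
definition convex_on_Z :: "'a::real_vector topology \<Rightarrow> ('a \<times> ('a \<Rightarrow> real) \<Rightarrow> ereal) \<Rightarrow> bool" where
  "convex_on_Z T f \<longleftrightarrow> (\<forall>z\<in>Zset T. \<forall>z'\<in>Zset T. \<forall>t::real. 0 < t \<and> t < 1 \<longrightarrow>
      f (zcomb t z z') \<le> ereal t * f z + ereal (1 - t) * f z')"

definition lsc_Z :: "'a::real_vector topology \<Rightarrow> ('a \<times> ('a \<Rightarrow> real) \<Rightarrow> ereal) \<Rightarrow> bool" where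
  "lsc_Z T f \<longleftrightarrow> (\<forall>r::real. closedin (Ztop T) {z \<in> Zset T. f z \<le> ereal r})"

definition classC :: "'a::real_vector topology \<Rightarrow> ('a \<times> ('a \<Rightarrow> real) \<Rightarrow> ereal) set" where
  "classC T = {f. proper_on (Zset T) f \<and> convex_on_Z T f \<and> (\<forall>z\<in>Zset T. ereal (cpl z) \<le> f z)}"

definition classR :: "'a::real_vector topology \<Rightarrow> ('a \<times> ('a \<Rightarrow> real) \<Rightarrow> ereal) set" where
  "classR T = {f \<in> classC T. lsc_Z T f}"

definition classD :: "'a::real_vector topology \<Rightarrow> ('a \<times> ('a \<Rightarrow> real) \<Rightarrow> ereal) set" where
  "classD T = {f \<in> classR T. \<forall>z\<in>Zset T. ereal (cpl z) \<le> sqconj T f z}"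

end

theory Submission
  imports Defs "HOL-Library.Function_Algebras"
begin

text \<open>
  If h(z) = c(z), then, since c \<le> h and c is quadratic, comparing h with c along the segment
  from z to any z' shows that z' \<mapsto> z\<cdot>z' - c(z) is an affine minorant of h, i.e. h\<box>(z) \<le> c(z);
  the reverse inequality is the term z' = z of the supremum defining h\<box>(z).

  Conversely, h\<box>(z0) = c(z0) says that l(z') = z0\<cdot>z' - c(z0) is an affine minorant of h.
  If h(z0) > c(z0) and h is lower semicontinuous, an algebraic Hahn-Banach separation of the
  epigraph of h from an open slab below h(z0) gives a continuous affine minorant m of h with
  m(z0) > c(z0); as the dual of (Z, \<tau> \<times> \<omega>*) is Z itself, m(z') = u\<cdot>z' + a.  For 0 < t < 1
  the point p = t u + (1 - t) z0 is the slope of the affine minorant t m + (1 - t) l, so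
  h\<box>(p) \<le> (1 - t) c(z0) - t a, while c(p) \<le> h\<box>(p) for h in \<D>.  Expanding the quadratic c(p)
  and letting t \<rightarrow> 0 gives m(z0) \<le> c(z0), a contradiction.
\<close>

section \<open>Linear structure of Z\<close>

instantiation "fun" :: (type, real_vector) real_vector
begin
definition scaleR_fun :: "real \<Rightarrow> ('a \<Rightarrow> 'b) \<Rightarrow> 'a \<Rightarrow> 'b" where
  "scaleR_fun c f = (\<lambda>x. c *\<^sub>R f x)"
instance by standard (auto simp: scaleR_fun_def plus_fun_def algebra_simps)
end

lemma scaleR_fun_apply [simp]: "(c *\<^sub>R f) x = c *\<^sub>R f x"
  by (simp add: scaleR_fun_def)

lemma sum_fun_apply: "finite S \<Longrightarrow> (sum F S) y = (\<Sum>i\<in>S. F i y)"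
  by (induction S rule: finite_induct) auto

lemma dual_linear: "f \<in> dual T \<Longrightarrow> linear f"
  unfolding dual_def by simp

lemma dual_lincomb:
  assumes "f \<in> dual T" "g \<in> dual T"
  shows "(\<lambda>y. a * f y + b * g y) \<in> dual T"
proof -
  have lf: "linear f" "linear g" and cf: "continuous_map T euclideanreal f" "continuous_map T euclideanreal g"
    using assms unfolding dual_def by auto
  have "linear (\<lambda>y. a * f y + b * g y)"
    by (rule linearI) (simp_all add: linear_add[OF lf(1)] linear_add[OF lf(2)] linear_scale[OF lf(1)]
        linear_scale[OF lf(2)] algebra_simps)
  moreover have "continuous_map T euclideanreal (\<lambda>y. a * f y + b * g y)"
    by (intro continuous_map_add continuous_map_real_mult_left cf)
  ultimately show ?thesis unfolding dual_def by simp
qed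

lemma lincomb_Z_eq:
  "a *\<^sub>R u + b *\<^sub>R w = (a *\<^sub>R fst u + b *\<^sub>R fst w, \<lambda>y. a * snd u y + b * snd w y)"
  by (simp add: prod_eq_iff fun_eq_iff)

lemma Zset_lincomb:
  assumes "u \<in> Zset T" "w \<in> Zset T"
  shows "a *\<^sub>R u + b *\<^sub>R w \<in> Zset T"
  using assms dual_lincomb unfolding lincomb_Z_eq Zset_def by (auto simp: mem_Times_iff)

lemma zdot_lincomb:
  assumes "z \<in> Zset T"
  shows "zdot (a *\<^sub>R u + b *\<^sub>R w) z = a * zdot u z + b * zdot w z"
proof -
  have "linear (snd z)" using assms unfolding Zset_def by (auto simp: dual_linear)
  then show ?thesis
    unfolding lincomb_Z_eq zdot_def by (simp add: linear_add linear_scale algebra_simps)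
qed

lemma zdot_scaleR:
  assumes "z \<in> Zset T"
  shows "zdot (c *\<^sub>R u) z = c * zdot u z"
  using zdot_lincomb[OF assms, of c u 0 u] by simp

lemma Zset_scaleR: "u \<in> Zset T \<Longrightarrow> c *\<^sub>R u \<in> Zset T"
  using Zset_lincomb[of u T u c 0] by simp

lemma zcomb_eq_lincomb: "zcomb t z z' = t *\<^sub>R z + (1 - t) *\<^sub>R z'"
  unfolding zcomb_def lincomb_Z_eq ..

lemma zdot_commute: "zdot z z' = zdot z' z"
  unfolding zdot_def by simp

lemma zdot_self: "zdot z z = 2 * cpl z"
  unfolding zdot_def cpl_def by simp

lemma cpl_zcomb:
  assumes z: "z \<in> Zset T" and z': "z' \<in> Zset T"
  shows "cpl (zcomb t z z') = t * t * cpl z + t * (1 - t) * zdot z z' + (1 - t) * (1 - t) * cpl z'"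
proof -
  let ?p = "t *\<^sub>R z + (1 - t) *\<^sub>R z'"
  have "2 * cpl (zcomb t z z') = zdot ?p ?p"
    by (simp add: zdot_self zcomb_eq_lincomb)
  also have "\<dots> = t * zdot ?p z + (1 - t) * zdot ?p z'"
    using zdot_lincomb[OF Zset_lincomb[OF z z']] zdot_commute by metis
  also have "\<dots> = 2 * (t * t * cpl z + t * (1 - t) * zdot z z' + (1 - t) * (1 - t) * cpl z')"
    unfolding zdot_lincomb[OF z] zdot_lincomb[OF z']
    by (simp add: zdot_self zdot_commute[of z' z] algebra_simps)
  finally show ?thesis by simp
qed

section \<open>Affine minorants and the conjugate\<close>

lemma affine_minorant_if_sqconj_le:
  assumes "z' \<in> Zset T" "sqconj T h z \<le> ereal (cpl z)"
  shows "ereal (zdot z z' - cpl z) \<le> h z'"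
proof -
  have "ereal (zdot z z') - h z' \<le> sqconj T h z"
    unfolding sqconj_def using assms(1) by (rule SUP_upper)
  then have "ereal (zdot z z') - h z' \<le> ereal (cpl z)"
    using assms(2) by (rule order_trans)
  then show ?thesis by (cases "h z'") auto
qed

lemma sqconj_le_if_affine_minorant:
  assumes "\<forall>z'\<in>Zset T. ereal (zdot u z' + a) \<le> h z'"
  shows "sqconj T h u \<le> ereal (- a)"
  unfolding sqconj_def
proof (rule SUP_least)
  fix z' assume "z' \<in> Zset T"
  then have "ereal (zdot u z' + a) \<le> h z'" using assms by blast
  then show "ereal (zdot u z') - h z' \<le> ereal (- a)" by (cases "h z'") auto
qed

lemma nonpos_if_le_all_small_multiples:
  fixes a b :: real
  assumes "\<And>t. 0 < t \<Longrightarrow> t < 1 \<Longrightarrow> a \<le> t * b"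
  shows "a \<le> 0"
proof (rule ccontr)
  assume "\<not> a \<le> 0"
  then have a: "a > 0" by simp
  define t where "t = a / (2 * (\<bar>b\<bar> + a))"
  have t0: "t > 0" using a unfolding t_def by (simp add: add_pos_nonneg)
  have t1: "t < 1" using a unfolding t_def by (simp add: field_simps)
  have "t * b \<le> t * (\<bar>b\<bar> + a)" using t0 a by (intro mult_left_mono) auto
  also have "\<dots> = a / 2" using a unfolding t_def by (simp add: field_simps)
  also have "\<dots> < a" using a by simp
  finally show False using assms[OF t0 t1] by simp
qed

lemma sqconj_eq_cpl_if_eq_cpl:
  assumes hC: "h \<in> classC T" and z: "z \<in> Zset T" and hz: "h z = ereal (cpl z)"
  shows "sqconj T h z = ereal (cpl z)"
proof (rule antisym)
  have cvx: "convex_on_Z T h" and ge: "\<forall>z\<in>Zset T. ereal (cpl z) \<le> h z"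
    using hC unfolding classC_def by auto
  show "sqconj T h z \<le> ereal (cpl z)"
    unfolding sqconj_def
  proof (rule SUP_least)
    fix z' assume z': "z' \<in> Zset T"
    show "ereal (zdot z z') - h z' \<le> ereal (cpl z)"
    proof (cases "h z'")
      case (real H)
      \<comment> \<open>On the segment from z to z', the quadratic c stays below the affine bound given by
          convexity, and its first-order term at z is z\<cdot>z' - 2 c(z).\<close>
      have "zdot z z' - H - cpl z \<le> 0"
      proof (rule nonpos_if_le_all_small_multiples)
        fix t :: real assume t: "0 < t" "t < 1"
        have "ereal (cpl (zcomb t z' z)) \<le> h (zcomb t z' z)"
          using ge Zset_lincomb[OF z' z] by (simp add: zcomb_eq_lincomb)
        also have "\<dots> \<le> ereal t * h z' + ereal (1 - t) * h z"
          using cvx z' z t unfolding convex_on_Z_def by blast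
        finally have "t * t * cpl z' + t * (1 - t) * zdot z' z + (1 - t) * (1 - t) * cpl z
                        \<le> t * H + (1 - t) * cpl z"
          using real hz cpl_zcomb[OF z' z, of t] by simp
        then have "t * ((1 - t) * zdot z z') \<le> t * (H + (1 - t) * cpl z - t * cpl z')"
          by (simp add: zdot_commute algebra_simps)
        then have "(1 - t) * zdot z z' \<le> H + (1 - t) * cpl z - t * cpl z'"
          using t by simp
        then show "zdot z z' - H - cpl z \<le> t * (zdot z z' - cpl z - cpl z')"
          by (simp add: algebra_simps)
      qed
      then show ?thesis using real by simp
    qed (use ge z' in auto)
  qed
next
  have "ereal (zdot z z) - h z \<le> sqconj T h z" unfolding sqconj_def using z by (rule SUP_upper)
  then show "ereal (cpl z) \<le> sqconj T h z" by (simp add: hz zdot_self)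
qed

lemma classD_affine_minorant_le_cpl:
  assumes hD: "h \<in> classD T" and z0: "z0 \<in> Zset T" and u: "u \<in> Zset T"
    and l: "\<forall>z'\<in>Zset T. ereal (zdot z0 z' - cpl z0) \<le> h z'"
    and m: "\<forall>z'\<in>Zset T. ereal (zdot u z' + a) \<le> h z'"
  shows "zdot u z0 + a \<le> cpl z0"
proof -
  have D: "\<forall>z\<in>Zset T. ereal (cpl z) \<le> sqconj T h z" using hD unfolding classD_def by auto
  have "zdot u z0 + a - cpl z0 \<le> t * (zdot u z0 - cpl z0 - cpl u)" if t: "0 < t" "t < 1" for t
  proof -
    define p where "p = zcomb t u z0"
    have p: "p \<in> Zset T" unfolding p_def zcomb_eq_lincomb by (rule Zset_lincomb[OF u z0])
    \<comment> \<open>The convex combination of the two affine minorants is an affine minorant with slope p.\<close>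
    have "\<forall>z'\<in>Zset T. ereal (zdot p z' + (t * a - (1 - t) * cpl z0)) \<le> h z'"
    proof
      fix z' assume z': "z' \<in> Zset T"
      have lm: "ereal (zdot z0 z' - cpl z0) \<le> h z'" "ereal (zdot u z' + a) \<le> h z'"
        using l m z' by auto
      have p_z': "zdot p z' + (t * a - (1 - t) * cpl z0)
                    = t * (zdot u z' + a) + (1 - t) * (zdot z0 z' - cpl z0)"
        unfolding p_def zcomb_eq_lincomb zdot_lincomb[OF z'] by (simp add: algebra_simps)
      show "ereal (zdot p z' + (t * a - (1 - t) * cpl z0)) \<le> h z'"
      proof (cases "h z'")
        case (real H)
        have "t * (zdot u z' + a) + (1 - t) * (zdot z0 z' - cpl z0) \<le> t * H + (1 - t) * H"
          using lm real t by (intro add_mono mult_left_mono) auto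
        then show ?thesis using real p_z' by (simp add: algebra_simps)
      qed (use lm in auto)
    qed
    then have "sqconj T h p \<le> ereal (- (t * a - (1 - t) * cpl z0))"
      by (rule sqconj_le_if_affine_minorant)
    with D p have "ereal (cpl p) \<le> ereal (- (t * a - (1 - t) * cpl z0))"
      using order_trans by blast
    then have "cpl p \<le> (1 - t) * cpl z0 - t * a" by simp
    then have "t * (t * cpl u + (1 - t) * zdot u z0 - (1 - t) * cpl z0 + a) \<le> t * 0"
      unfolding p_def cpl_zcomb[OF u z0] by (simp add: algebra_simps)
    then have "t * cpl u + (1 - t) * zdot u z0 - (1 - t) * cpl z0 + a \<le> 0"
      by (rule mult_left_le_imp_le[OF _ t(1)])
    then show ?thesis by (simp add: left_diff_distrib right_diff_distrib)
  qed
  then have "zdot u z0 + a - cpl z0 \<le> 0" by (rule nonpos_if_le_all_small_multiples)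
  then show ?thesis by simp
qed

section \<open>Algebraic separation of convex sets\<close>

definition linear_graph :: "('v::real_vector \<times> real) set \<Rightarrow> bool" where
  "linear_graph G \<longleftrightarrow> (0, 0) \<in> G
     \<and> (\<forall>x a y b. (x, a) \<in> G \<longrightarrow> (y, b) \<in> G \<longrightarrow> (x + y, a + b) \<in> G)
     \<and> (\<forall>x a c. (x, a) \<in> G \<longrightarrow> (c *\<^sub>R x, c * a) \<in> G)
     \<and> (\<forall>x a b. (x, a) \<in> G \<longrightarrow> (x, b) \<in> G \<longrightarrow> a = b)"

lemma linear_graph_Union_chain:
  assumes "C \<noteq> {}" and lg: "\<And>G. G \<in> C \<Longrightarrow> linear_graph G"
    and ch: "\<And>G H. G \<in> C \<Longrightarrow> H \<in> C \<Longrightarrow> G \<subseteq> H \<or> H \<subseteq> G"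
  shows "linear_graph (\<Union>C)"
proof -
  have two: "\<exists>G\<in>C. p \<in> G \<and> q \<in> G" if "p \<in> \<Union>C" "q \<in> \<Union>C" for p q
    using that ch by blast
  show ?thesis unfolding linear_graph_def
  proof (intro conjI allI impI)
    obtain G where "G \<in> C" using \<open>C \<noteq> {}\<close> by auto
    then show "(0, 0) \<in> \<Union>C" using lg[of G] unfolding linear_graph_def by auto
  next
    fix x a y b assume "(x, a) \<in> \<Union>C" "(y, b) \<in> \<Union>C"
    then obtain G where "G \<in> C" "(x, a) \<in> G" "(y, b) \<in> G" using two by blast
    then show "(x + y, a + b) \<in> \<Union>C" using lg[of G] unfolding linear_graph_def by blast
  next
    fix x a c assume "(x, a) \<in> \<Union>C"
    then obtain G where "G \<in> C" "(x, a) \<in> G" by blast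
    then show "(c *\<^sub>R x, c * a) \<in> \<Union>C" using lg[of G] unfolding linear_graph_def by blast
  next
    fix x a b assume "(x, a) \<in> \<Union>C" "(x, b) \<in> \<Union>C"
    then obtain G where "G \<in> C" "(x, a) \<in> G" "(x, b) \<in> G" using two by blast
    then show "a = b" using lg[of G] unfolding linear_graph_def by blast
  qed
qed

lemma linear_graph_adjoin:
  assumes M: "linear_graph M" and x0: "\<nexists>a. (x0, a) \<in> M"
  shows "linear_graph {(x + t *\<^sub>R x0, a + t * c) | x a t. (x, a) \<in> M}"
    (is "linear_graph ?M'")
proof -
  have M0: "(0, 0) \<in> M" and Madd: "\<And>x a y b. (x, a) \<in> M \<Longrightarrow> (y, b) \<in> M \<Longrightarrow> (x + y, a + b) \<in> M"
    and Msc: "\<And>x a c. (x, a) \<in> M \<Longrightarrow> (c *\<^sub>R x, c * a) \<in> M"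
    and Mfun: "\<And>x a b. (x, a) \<in> M \<Longrightarrow> (x, b) \<in> M \<Longrightarrow> a = b"
    using M unfolding linear_graph_def by blast+
  show ?thesis unfolding linear_graph_def
  proof (intro conjI allI impI)
    show "(0, 0) \<in> ?M'" using M0 by force
  next
    fix x a y b assume "(x, a) \<in> ?M'" "(y, b) \<in> ?M'"
    then obtain x1 a1 t1 x2 a2 t2 where "(x1, a1) \<in> M" "(x2, a2) \<in> M"
      and "x = x1 + t1 *\<^sub>R x0" "a = a1 + t1 * c" "y = x2 + t2 *\<^sub>R x0" "b = a2 + t2 * c"
      by blast
    moreover have "x1 + t1 *\<^sub>R x0 + (x2 + t2 *\<^sub>R x0) = (x1 + x2) + (t1 + t2) *\<^sub>R x0"
      by (simp add: algebra_simps)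
    moreover have "a1 + t1 * c + (a2 + t2 * c) = (a1 + a2) + (t1 + t2) * c"
      by (simp add: algebra_simps)
    ultimately show "(x + y, a + b) \<in> ?M'" using Madd by blast
  next
    fix x a r assume "(x, a) \<in> ?M'"
    then obtain x1 a1 t1 where "(x1, a1) \<in> M" "x = x1 + t1 *\<^sub>R x0" "a = a1 + t1 * c"
      by blast
    moreover have "r *\<^sub>R (x1 + t1 *\<^sub>R x0) = r *\<^sub>R x1 + (r * t1) *\<^sub>R x0"
      by (simp add: algebra_simps)
    moreover have "r * (a1 + t1 * c) = r * a1 + (r * t1) * c" by (simp add: algebra_simps)
    ultimately show "(r *\<^sub>R x, r * a) \<in> ?M'" using Msc by blast
  next
    fix x a b assume "(x, a) \<in> ?M'" "(x, b) \<in> ?M'"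
    then obtain x1 a1 t1 x2 a2 t2 where m1: "(x1, a1) \<in> M" and m2: "(x2, a2) \<in> M"
      and e: "x = x1 + t1 *\<^sub>R x0" "a = a1 + t1 * c" "x = x2 + t2 *\<^sub>R x0" "b = a2 + t2 * c"
      by blast
    have d: "(x2 - x1, a2 - a1) \<in> M"
      using Madd[OF m2 Msc[OF m1, of "-1"]] by simp
    have "t1 = t2"
    proof (rule ccontr)
      assume ne: "t1 \<noteq> t2"
      have "x2 - x1 = (t1 - t2) *\<^sub>R x0" using e by (simp add: algebra_simps)
      then have "(1 / (t1 - t2)) *\<^sub>R (x2 - x1) = x0" using ne by simp
      then have "(x0, (1 / (t1 - t2)) * (a2 - a1)) \<in> M" using Msc[OF d] by metis
      then show False using x0 by blast
    qed
    then have "a1 = a2" using e Mfun m1 m2 by simp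
    then show "a = b" using e \<open>t1 = t2\<close> by simp
  qed
qed

lemma dominated_graph_slope_bound:
  fixes U :: "'v::real_vector set"
  assumes G: "linear_graph G" and cvx: "convex U"
    and dom: "\<forall>x a. (x, a) \<in> G \<longrightarrow> x \<in> U \<longrightarrow> a \<le> 1"
    and xa: "(x, a) \<in> G" and t: "t > 0" and xt: "x + t *\<^sub>R x0 \<in> U"
    and yb: "(y, b) \<in> G" and s: "s > 0" and ys: "y - s *\<^sub>R x0 \<in> U"
  shows "(b - 1) / s \<le> (1 - a) / t"
proof -
  have "(t / (s + t)) *\<^sub>R (y - s *\<^sub>R x0) + (s / (s + t)) *\<^sub>R (x + t *\<^sub>R x0) \<in> U"
    using cvx ys xt s t unfolding convex_def
    by (metis (no_types, lifting) add_divide_distrib add_pos_pos divide_nonneg_nonneg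
        divide_self_if less_eq_real_def not_less_iff_gr_or_eq add.commute)
  moreover have "(t / (s + t)) *\<^sub>R (y - s *\<^sub>R x0) + (s / (s + t)) *\<^sub>R (x + t *\<^sub>R x0)
      = (1 / (s + t)) *\<^sub>R (t *\<^sub>R y + s *\<^sub>R x)"
    using s t by (simp add: algebra_simps)
  moreover have "((1 / (s + t)) *\<^sub>R (t *\<^sub>R y + s *\<^sub>R x), (1 / (s + t)) * (t * b + s * a)) \<in> G"
    using G xa yb unfolding linear_graph_def by blast
  ultimately have "(1 / (s + t)) * (t * b + s * a) \<le> 1" using dom by metis
  then have "t * b + s * a \<le> s + t" using s t by (simp add: field_simps)
  then show ?thesis using s t by (simp add: field_simps)
qed

lemma dominated_graph_extension_value:
  fixes U :: "'v::real_vector set"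
  assumes G: "linear_graph G" and cvx: "convex U"
    and dom: "\<forall>x a. (x, a) \<in> G \<longrightarrow> x \<in> U \<longrightarrow> a \<le> 1"
    and absorbing: "\<And>d. \<exists>t>0. t *\<^sub>R d \<in> U"
  shows "\<exists>c. \<forall>x a t. (x, a) \<in> G \<longrightarrow> x + t *\<^sub>R x0 \<in> U \<longrightarrow> a + t * c \<le> 1"
proof -
  have G0: "(0, 0) \<in> G" using G unfolding linear_graph_def by simp
  \<comment> \<open>Any c between the supremum of the lower slopes and the infimum of the upper slopes works.\<close>
  define Lo where "Lo = {(b - 1) / s | y b s. (y, b) \<in> G \<and> s > 0 \<and> y - s *\<^sub>R x0 \<in> U}"
  obtain s0 where s0: "s0 > 0" "s0 *\<^sub>R (- x0) \<in> U" using absorbing by blast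
  obtain t0 where t0: "t0 > 0" "t0 *\<^sub>R x0 \<in> U" using absorbing by blast
  have Lo_ne: "Lo \<noteq> {}" unfolding Lo_def using G0 s0 by force
  have Lo_le: "l \<le> (1 - a) / t" if "l \<in> Lo" "(x, a) \<in> G" "t > 0" "x + t *\<^sub>R x0 \<in> U" for l x a t
    using that dominated_graph_slope_bound[OF G cvx dom] unfolding Lo_def by blast
  have Lo_bdd: "bdd_above Lo" using Lo_le[of _ 0 0 t0] G0 t0 unfolding bdd_above_def by auto
  have "a + t * Sup Lo \<le> 1" if xa: "(x, a) \<in> G" and xt: "x + t *\<^sub>R x0 \<in> U" for x a t
  proof -
    consider "t = 0" | "t > 0" | "t < 0" by linarith
    then show ?thesis
    proof cases
      case 1 then show ?thesis using dom xa xt by auto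
    next
      case 2
      have "Sup Lo \<le> (1 - a) / t" using Lo_ne Lo_le[OF _ xa 2 xt] by (auto intro: cSup_least)
      then show ?thesis using 2 by (simp add: field_simps)
    next
      case 3
      have "x - (- t) *\<^sub>R x0 \<in> U" "- t > 0" using xt 3 by auto
      then have "(a - 1) / (- t) \<in> Lo" unfolding Lo_def using xa by blast
      then have "(a - 1) / (- t) \<le> Sup Lo" using Lo_bdd by (rule cSup_upper)
      then show ?thesis using 3 by (simp add: field_simps)
    qed
  qed
  then show ?thesis by blast
qed

lemma maximal_dominated_linear_graph_total:
  fixes U :: "'v::real_vector set"
  assumes M: "linear_graph M" and cvx: "convex U" and absorbing: "\<And>d. \<exists>t>0. t *\<^sub>R d \<in> U"
    and dom: "\<forall>x a. (x, a) \<in> M \<longrightarrow> x \<in> U \<longrightarrow> a \<le> 1"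
    and max: "\<And>X. linear_graph X \<Longrightarrow> M \<subseteq> X \<Longrightarrow> \<forall>x a. (x, a) \<in> X \<longrightarrow> x \<in> U \<longrightarrow> a \<le> 1
                \<Longrightarrow> X = M"
  shows "\<exists>a. (x0, a) \<in> M"
proof (rule ccontr)
  assume nx: "\<nexists>a. (x0, a) \<in> M"
  obtain c where c: "\<forall>x a t. (x, a) \<in> M \<longrightarrow> x + t *\<^sub>R x0 \<in> U \<longrightarrow> a + t * c \<le> 1"
    using dominated_graph_extension_value[OF M cvx dom absorbing] by blast
  define M' where "M' = {(x + t *\<^sub>R x0, a + t * c) | x a t. (x, a) \<in> M}"
  have "linear_graph M'" unfolding M'_def by (rule linear_graph_adjoin[OF M nx])
  moreover have "M \<subseteq> M'" unfolding M'_def by force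
  moreover have "\<forall>x a. (x, a) \<in> M' \<longrightarrow> x \<in> U \<longrightarrow> a \<le> 1" using c unfolding M'_def by blast
  ultimately have "M' = M" by (rule max)
  moreover have "(x0, c) \<in> M'" using M unfolding M'_def linear_graph_def by force
  ultimately show False using nx by blast
qed

lemma linear_graph_total_linear:
  fixes M :: "('v::real_vector \<times> real) set"
  assumes M: "linear_graph M" and total: "\<And>x. \<exists>a. (x, a) \<in> M"
  shows "\<exists>F::'v \<Rightarrow> real. linear F \<and> (\<forall>x a. (x, a) \<in> M \<longleftrightarrow> a = F x)"
proof -
  have Madd: "\<And>x a y b. (x, a) \<in> M \<Longrightarrow> (y, b) \<in> M \<Longrightarrow> (x + y, a + b) \<in> M"
    and Msc: "\<And>x a c. (x, a) \<in> M \<Longrightarrow> (c *\<^sub>R x, c * a) \<in> M"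
    and Mfun: "\<And>x a b. (x, a) \<in> M \<Longrightarrow> (x, b) \<in> M \<Longrightarrow> a = b"
    using M unfolding linear_graph_def by blast+
  define F where "F x = (THE a. (x, a) \<in> M)" for x
  have FM: "(x, F x) \<in> M" for x
    unfolding F_def using total[of x] Mfun by (metis theI)
  have F_eq: "(x, a) \<in> M \<longleftrightarrow> a = F x" for x a using FM Mfun by blast
  have "linear F"
  proof (rule linearI)
    show "F (x + y) = F x + F y" for x y
      using Madd[OF FM FM] F_eq by simp
    show "F (r *\<^sub>R x) = r *\<^sub>R F x" for r x
      using Msc[OF FM] F_eq by simp
  qed
  with F_eq show ?thesis by blast
qed

lemma linear_functional_le_one_on_absorbing_convex:
  fixes U :: "'v::real_vector set"
  assumes cvx: "convex U" and U0: "0 \<in> U" and absorbing: "\<And>d. \<exists>t>0. t *\<^sub>R d \<in> U"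
    and y0: "y0 \<notin> U"
  shows "\<exists>F::'v \<Rightarrow> real. linear F \<and> F y0 = 1 \<and> (\<forall>u\<in>U. F u \<le> 1)"
proof -
  define G0 where "G0 = {(t *\<^sub>R y0, t) | t. True}"
  define A where "A = {G. linear_graph G \<and> G0 \<subseteq> G \<and> (\<forall>x a. (x, a) \<in> G \<longrightarrow> x \<in> U \<longrightarrow> a \<le> 1)}"
  have "y0 \<noteq> 0" using U0 y0 by auto
  then have "linear_graph G0" unfolding linear_graph_def G0_def by (auto simp: scaleR_add_left)
  moreover have "a \<le> 1" if "(x, a) \<in> G0" "x \<in> U" for x a
  proof (rule ccontr)
    assume "\<not> a \<le> 1"
    then have "(1 / a) *\<^sub>R x + (1 - 1 / a) *\<^sub>R 0 \<in> U"
      using convexD[OF cvx that(2) U0, of "1 / a" "1 - 1 / a"] by simp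
    then have "y0 \<in> U" using that(1) \<open>\<not> a \<le> 1\<close> unfolding G0_def by auto
    then show False using y0 by simp
  qed
  ultimately have G0A: "G0 \<in> A" unfolding A_def by blast
  have "\<exists>M\<in>A. \<forall>X\<in>A. M \<subseteq> X \<longrightarrow> X = M"
  proof (rule Zorn_Lemma2, intro ballI)
    fix C assume C: "C \<in> chains A"
    show "\<exists>V\<in>A. \<forall>X\<in>C. X \<subseteq> V"
    proof (cases "C = {}")
      case False
      have CA: "C \<subseteq> A" using C unfolding chains_def by auto
      have "linear_graph (\<Union>C)"
        using False CA C by (intro linear_graph_Union_chain) (auto simp: A_def dest: chainsD)
      then have "\<Union>C \<in> A" using False CA unfolding A_def by blast
      then show ?thesis by blast
    qed (use G0A in auto)
  qed
  then obtain M where "M \<in> A" and max: "\<And>X. X \<in> A \<Longrightarrow> M \<subseteq> X \<Longrightarrow> X = M" by blast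
  then have M: "linear_graph M" "G0 \<subseteq> M" and dom: "\<forall>x a. (x, a) \<in> M \<longrightarrow> x \<in> U \<longrightarrow> a \<le> 1"
    unfolding A_def by auto
  have "X = M" if "linear_graph X" "M \<subseteq> X" "\<forall>x a. (x, a) \<in> X \<longrightarrow> x \<in> U \<longrightarrow> a \<le> 1" for X
    using max[of X] that M(2) unfolding A_def by blast
  then have "\<exists>a. (x, a) \<in> M" for x
    by (rule maximal_dominated_linear_graph_total[OF M(1) cvx absorbing dom])
  then obtain F :: "'v \<Rightarrow> real" where "linear F" and F: "\<forall>x a. (x, a) \<in> M \<longleftrightarrow> a = F x"
    using linear_graph_total_linear[OF M(1)] by blast
  moreover have "F y0 = 1" using F M(2) unfolding G0_def by force
  moreover have "\<forall>u\<in>U. F u \<le> 1" using F dom by blast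
  ultimately show ?thesis by blast
qed

lemma convex_sets_separation:
  fixes A B :: "'v::real_vector set"
  assumes A: "convex A" and B: "convex B" and disj: "A \<inter> B = {}" and a0: "a0 \<in> A" and b0: "b0 \<in> B"
    and absorbing: "\<And>d. \<exists>t>0. a0 + t *\<^sub>R d \<in> A"
  shows "\<exists>\<Phi>::'v \<Rightarrow> real. linear \<Phi> \<and> \<Phi> b0 - \<Phi> a0 = 1 \<and> (\<forall>a\<in>A. \<forall>b\<in>B. \<Phi> a \<le> \<Phi> b)"
proof -
  define q where "q = b0 - a0"
  define U where "U = {a - b + q | a b. a \<in> A \<and> b \<in> B}"
  have cU: "convex U" unfolding convex_def
  proof (intro ballI allI impI)
    fix x y and u v :: real assume x: "x \<in> U" and y: "y \<in> U" and uv: "0 \<le> u" "0 \<le> v" "u + v = 1"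
    obtain a1 b1 where x': "x = a1 - b1 + q" "a1 \<in> A" "b1 \<in> B" using x unfolding U_def by blast
    obtain a2 b2 where y': "y = a2 - b2 + q" "a2 \<in> A" "b2 \<in> B" using y unfolding U_def by blast
    have "u *\<^sub>R x + v *\<^sub>R y = (u *\<^sub>R a1 + v *\<^sub>R a2) - (u *\<^sub>R b1 + v *\<^sub>R b2) + (u + v) *\<^sub>R q"
      unfolding x'(1) y'(1) by (simp add: algebra_simps)
    moreover have "u *\<^sub>R a1 + v *\<^sub>R a2 \<in> A" using convexD[OF A x'(2) y'(2)] uv by blast
    moreover have "u *\<^sub>R b1 + v *\<^sub>R b2 \<in> B" using convexD[OF B x'(3) y'(3)] uv by blast
    ultimately show "u *\<^sub>R x + v *\<^sub>R y \<in> U" unfolding U_def using uv by auto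
  qed
  have "0 = a0 - b0 + q" unfolding q_def by simp
  then have U0: "0 \<in> U" unfolding U_def using a0 b0 by blast
  have Uabs: "\<exists>t>0. t *\<^sub>R d \<in> U" for d
  proof -
    obtain t where "t > 0" "a0 + t *\<^sub>R d \<in> A" using absorbing by blast
    moreover have "t *\<^sub>R d = (a0 + t *\<^sub>R d) - b0 + q" unfolding q_def by simp
    ultimately show ?thesis unfolding U_def using b0 by blast
  qed
  have qU: "q \<notin> U"
  proof
    assume "q \<in> U"
    then obtain a b where "q = a - b + q" "a \<in> A" "b \<in> B" unfolding U_def by blast
    then have "a \<in> A \<inter> B" by (simp add: algebra_simps)
    then show False using disj by blast
  qed
  obtain \<Phi> :: "'v \<Rightarrow> real" where lin: "linear \<Phi>" and \<Phi>q: "\<Phi> q = 1" and \<Phi>U: "\<forall>u\<in>U. \<Phi> u \<le> 1"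
    using linear_functional_le_one_on_absorbing_convex[OF cU U0 Uabs qU] by blast
  have "\<Phi> a \<le> \<Phi> b" if "a \<in> A" "b \<in> B" for a b
  proof -
    have "\<Phi> (a - b + q) \<le> 1" using \<Phi>U that unfolding U_def by blast
    then show ?thesis using \<Phi>q by (simp add: linear_add[OF lin] linear_diff[OF lin])
  qed
  moreover have "\<Phi> b0 - \<Phi> a0 = 1" using \<Phi>q unfolding q_def by (simp add: linear_diff[OF lin])
  ultimately show ?thesis using lin by (intro exI[of _ \<Phi>]) simp
qed

section \<open>Neighbourhoods in X and in Z\<close>

lemma lcs_topspace: "lcs T \<Longrightarrow> topspace T = UNIV"
  unfolding lcs_def by simp

lemma lcs_continuous_translation:
  assumes "lcs T" shows "continuous_map T T (\<lambda>x. x + b)"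
proof -
  have "continuous_map T (prod_topology T T) (\<lambda>x. (x, b))"
    using assms by (intro continuous_map_pairedI) (auto simp: lcs_topspace)
  moreover have "continuous_map (prod_topology T T) T (\<lambda>(x, y). x + y)"
    using assms unfolding lcs_def by simp
  ultimately show ?thesis using continuous_map_compose by (fastforce simp: o_def)
qed

lemma lcs_continuous_scaling:
  assumes "lcs T" shows "continuous_map T T (\<lambda>x. a *\<^sub>R x)"
proof -
  have "continuous_map T (prod_topology euclideanreal T) (\<lambda>x. (a, x))"
    using assms by (intro continuous_map_pairedI) auto
  moreover have "continuous_map (prod_topology euclideanreal T) T (\<lambda>(a, x). a *\<^sub>R x)"
    using assms unfolding lcs_def by simp
  ultimately show ?thesis using continuous_map_compose by (fastforce simp: o_def)
qed

lemma lcs_continuous_ray: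
  assumes "lcs T" shows "continuous_map euclideanreal T (\<lambda>t. t *\<^sub>R d)"
proof -
  have "continuous_map euclideanreal (prod_topology euclideanreal T) (\<lambda>t. (t, d))"
    using assms by (intro continuous_map_pairedI) (auto simp: lcs_topspace)
  moreover have "continuous_map (prod_topology euclideanreal T) T (\<lambda>(a, x). a *\<^sub>R x)"
    using assms unfolding lcs_def by simp
  ultimately show ?thesis using continuous_map_compose by (fastforce simp: o_def)
qed

lemma lcs_openin_preimage:
  assumes "lcs T" "continuous_map T T f" "openin T V"
  shows "openin T {x. f x \<in> V}"
  using openin_continuous_map_preimage[OF assms(2,3)] lcs_topspace[OF assms(1)] by simp

lemma lcs_nhd_absorbing:
  assumes "lcs T" "openin T V" "0 \<in> V"
  shows "\<exists>e>0. \<forall>t. \<bar>t\<bar> < e \<longrightarrow> t *\<^sub>R d \<in> V"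
proof -
  have "openin euclideanreal {t \<in> topspace euclideanreal. t *\<^sub>R d \<in> V}"
    by (rule openin_continuous_map_preimage[OF lcs_continuous_ray[OF assms(1)] assms(2)])
  then have "open {t. t *\<^sub>R d \<in> V}" by simp
  moreover have "0 \<in> {t. t *\<^sub>R d \<in> V}" using assms(3) by simp
  ultimately obtain e where "e > 0" "ball 0 e \<subseteq> {t. t *\<^sub>R d \<in> V}" using openE by blast
  then show ?thesis by (intro exI[of _ e]) (auto simp: dist_real_def subset_iff)
qed

lemma lcs_linear_continuous_if_bounded_on_nhd:
  fixes L :: "'a::real_vector \<Rightarrow> real"
  assumes T: "lcs T" and L: "linear L" and V: "openin T V" "0 \<in> V" and B: "\<forall>y\<in>V. \<bar>L y\<bar> \<le> M"
  shows "continuous_map T euclideanreal L"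
  unfolding continuous_map_def
proof (intro conjI allI impI)
  show "L \<in> topspace T \<rightarrow> topspace euclideanreal" by simp
next
  fix U :: "real set" assume "openin euclideanreal U"
  then have oU: "open U" by simp
  show "openin T {x \<in> topspace T. L x \<in> U}"
  proof (subst openin_subopen, intro ballI)
    fix x assume "x \<in> {x \<in> topspace T. L x \<in> U}"
    then obtain e where e: "e > 0" "ball (L x) e \<subseteq> U" using openE[OF oU] by auto
    have M0: "M \<ge> 0" using B V(2) by force
    define c where "c = e / (M + 1)"
    have c0: "c > 0" unfolding c_def using e M0 by simp
    \<comment> \<open>The translate x + c V is a neighbourhood of x on which L varies by less than e.\<close>
    define N where "N = {y. (1 / c) *\<^sub>R (y + (- x)) \<in> V}"
    have "continuous_map T T (\<lambda>y. (1 / c) *\<^sub>R (y + (- x)))"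
      using continuous_map_compose[OF lcs_continuous_translation[OF T, of "-x"]
          lcs_continuous_scaling[OF T, of "1 / c"]]
      by (simp add: o_def)
    then have oN: "openin T N" unfolding N_def by (rule lcs_openin_preimage[OF T _ V(1)])
    have xN: "x \<in> N" unfolding N_def using V(2) by simp
    have "N \<subseteq> {x \<in> topspace T. L x \<in> U}"
    proof
      fix y assume "y \<in> N"
      then have "\<bar>L ((1 / c) *\<^sub>R (y + (- x)))\<bar> \<le> M" using B unfolding N_def by blast
      then have "\<bar>(1 / c) * (L y - L x)\<bar> \<le> M"
        by (simp add: linear_scale[OF L] linear_diff[OF L])
      then have "\<bar>L y - L x\<bar> \<le> c * M" using c0 by (simp add: abs_mult field_simps)
      also have "c * M < e" unfolding c_def using e M0 by (simp add: field_simps)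
      finally have "L y \<in> ball (L x) e" by (simp add: dist_real_def abs_minus_commute)
      then show "y \<in> {x \<in> topspace T. L x \<in> U}" using e lcs_topspace[OF T] by auto
    qed
    then show "\<exists>N. openin T N \<and> x \<in> N \<and> N \<subseteq> {x \<in> topspace T. L x \<in> U}" using oN xN by blast
  qed
qed

definition box_nbhd :: "'a set \<Rightarrow> 'a set \<Rightarrow> real \<Rightarrow> ('a \<times> ('a \<Rightarrow> real)) set" where
  "box_nbhd V F \<delta> = {w. fst w \<in> V \<and> (\<forall>i\<in>F. \<bar>snd w i\<bar> < \<delta>)}"

lemma zero_in_box_nbhd: "0 \<in> V \<Longrightarrow> \<delta> > 0 \<Longrightarrow> 0 \<in> box_nbhd V F \<delta>"
  unfolding box_nbhd_def by simp

lemma convex_box_nbhd: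
  assumes "convex V"
  shows "convex (box_nbhd V F \<delta>)"
  unfolding convex_def
proof (intro ballI allI impI)
  fix x y :: "'a \<times> ('a \<Rightarrow> real)" and u v :: real
  assume x: "x \<in> box_nbhd V F \<delta>" and y: "y \<in> box_nbhd V F \<delta>" and uv: "0 \<le> u" "0 \<le> v" "u + v = 1"
  have "fst (u *\<^sub>R x + v *\<^sub>R y) \<in> V"
    using convexD[OF assms, of "fst x" "fst y" u v] x y uv unfolding box_nbhd_def by simp
  moreover have "\<bar>snd (u *\<^sub>R x + v *\<^sub>R y) i\<bar> < \<delta>" if i: "i \<in> F" for i
  proof -
    have "\<bar>u * snd x i + v * snd y i\<bar> \<le> u * \<bar>snd x i\<bar> + v * \<bar>snd y i\<bar>"
      using uv by (metis abs_mult abs_of_nonneg abs_triangle_ineq)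
    also have "\<dots> < \<delta>" using x y i uv unfolding box_nbhd_def by (intro convex_bound_lt) auto
    finally show ?thesis by simp
  qed
  ultimately show "u *\<^sub>R x + v *\<^sub>R y \<in> box_nbhd V F \<delta>" unfolding box_nbhd_def by simp
qed

lemma box_nbhd_absorbing:
  assumes T: "lcs T" and V: "openin T V" "0 \<in> V" and F: "finite F" and \<delta>: "\<delta> > 0"
  shows "\<exists>e>0. \<forall>t. \<bar>t\<bar> < e \<longrightarrow> t *\<^sub>R d \<in> box_nbhd V F \<delta>"
proof -
  obtain e1 where e1: "e1 > 0" "\<forall>t. \<bar>t\<bar> < e1 \<longrightarrow> t *\<^sub>R fst d \<in> V"
    using lcs_nhd_absorbing[OF T V] by blast
  define S where "S = (\<Sum>i\<in>F. \<bar>snd d i\<bar>)"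
  have S0: "S \<ge> 0" unfolding S_def by (simp add: sum_nonneg)
  define e2 where "e2 = \<delta> / (1 + S)"
  have e2: "e2 > 0" unfolding e2_def using \<delta> S0 by simp
  have "t *\<^sub>R d \<in> box_nbhd V F \<delta>" if t: "\<bar>t\<bar> < min e1 e2" for t
  proof -
    have "\<bar>t * snd d i\<bar> < \<delta>" if i: "i \<in> F" for i
    proof -
      have "\<bar>snd d i\<bar> \<le> S" unfolding S_def using member_le_sum[OF i _ F, of "\<lambda>i. \<bar>snd d i\<bar>"] by simp
      then have "\<bar>t * snd d i\<bar> \<le> \<bar>t\<bar> * (1 + S)" by (simp add: abs_mult mult_left_mono)
      also have "\<dots> < e2 * (1 + S)" using t S0 by (intro mult_strict_right_mono) auto
      also have "\<dots> = \<delta>" unfolding e2_def using S0 by simp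
      finally show ?thesis .
    qed
    then show ?thesis using e1 t unfolding box_nbhd_def by simp
  qed
  then show ?thesis using e1 e2 by (intro exI[of _ "min e1 e2"]) simp
qed

lemma linear_functional_eval_if_finite_support:
  fixes L :: "('a::real_vector \<Rightarrow> real) \<Rightarrow> real"
  assumes L: "linear L" and F: "finite F" and van: "\<And>g. \<forall>i\<in>F. g i = 0 \<Longrightarrow> L g = 0"
  shows "\<exists>x. \<forall>g. linear g \<longrightarrow> L g = g x"
proof -
  define ind where "ind i = (\<lambda>y::'a. if y = i then (1::real) else 0)" for i
  have "L g = g (\<Sum>i\<in>F. L (ind i) *\<^sub>R i)" if g: "linear g" for g
  proof -
    define \<psi> where "\<psi> = (\<Sum>i\<in>F. g i *\<^sub>R ind i)"
    have "\<psi> j = g j" if "j \<in> F" for j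
    proof -
      have "\<psi> j = (\<Sum>i\<in>F. if j = i then g i else 0)"
        unfolding \<psi>_def using F by (simp add: sum_fun_apply ind_def if_distrib cong: if_cong)
      also have "\<dots> = g j" using that F by simp
      finally show ?thesis .
    qed
    then have "L (g - \<psi>) = 0" by (intro van) simp
    then have "L g = L \<psi>" by (simp add: linear_diff[OF L])
    also have "\<dots> = (\<Sum>i\<in>F. g i * L (ind i))" unfolding \<psi>_def
      by (simp add: linear_sum[OF L] linear_scale[OF L])
    also have "\<dots> = g (\<Sum>i\<in>F. L (ind i) *\<^sub>R i)"
      by (simp add: linear_sum[OF g] linear_scale[OF g] mult.commute)
    finally show ?thesis .
  qed
  then show ?thesis by blast
qed

lemma Z_dual_representation:
  fixes \<Lambda> :: "'a::real_vector \<times> ('a \<Rightarrow> real) \<Rightarrow> real"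
  assumes T: "lcs T" and \<Lambda>: "linear \<Lambda>"
    and V: "openin T V" "0 \<in> V" "\<forall>y\<in>V. - y \<in> V" and F: "finite F" and \<delta>: "\<delta> > 0"
    and bnd: "\<forall>w\<in>box_nbhd V F \<delta>. \<Lambda> w \<le> M"
  shows "\<exists>u\<in>Zset T. \<forall>z\<in>Zset T. \<Lambda> z = zdot u z"
proof -
  define L1 where "L1 y = \<Lambda> (y, 0)" for y
  define L2 where "L2 g = \<Lambda> (0, g)" for g
  have lL1: "linear L1"
  proof (rule linearI)
    show "L1 (x + y) = L1 x + L1 y" for x y
      unfolding L1_def using linear_add[OF \<Lambda>, of "(x, 0)" "(y, 0)"] by simp
    show "L1 (c *\<^sub>R x) = c *\<^sub>R L1 x" for c x
      unfolding L1_def using linear_scale[OF \<Lambda>, of c "(x, 0)"] by simp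
  qed
  have lL2: "linear L2"
  proof (rule linearI)
    show "L2 (f + g) = L2 f + L2 g" for f g
      unfolding L2_def using linear_add[OF \<Lambda>, of "(0, f)" "(0, g)"] by simp
    show "L2 (c *\<^sub>R g) = c *\<^sub>R L2 g" for c g
      unfolding L2_def using linear_scale[OF \<Lambda>, of c "(0, g)"] by simp
  qed
  have "\<bar>L1 y\<bar> \<le> M" if "y \<in> V" for y
  proof -
    have "(y, 0) \<in> box_nbhd V F \<delta>" "(- y, 0) \<in> box_nbhd V F \<delta>"
      unfolding box_nbhd_def using that V(3) \<delta> by auto
    then have "L1 y \<le> M" "L1 (- y) \<le> M" using bnd unfolding L1_def by auto
    then show ?thesis by (simp add: linear_neg[OF lL1])
  qed
  then have L1: "L1 \<in> dual T"
    unfolding dual_def using lL1 lcs_linear_continuous_if_bounded_on_nhd[OF T lL1 V(1,2)] by blast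
  \<comment> \<open>A functional bounded above on a subspace vanishes there; here the subspace is
      the set of g vanishing on F.\<close>
  have "L2 g = 0" if "\<forall>i\<in>F. g i = 0" for g
  proof (rule ccontr)
    assume ne: "L2 g \<noteq> 0"
    define t where "t = (\<bar>M\<bar> + 1) / L2 g"
    have "(0, t *\<^sub>R g) \<in> box_nbhd V F \<delta>" unfolding box_nbhd_def using V(2) that \<delta> by simp
    then have "L2 (t *\<^sub>R g) \<le> M" using bnd unfolding L2_def by blast
    moreover have "L2 (t *\<^sub>R g) = \<bar>M\<bar> + 1" unfolding t_def using ne by (simp add: linear_scale[OF lL2])
    ultimately show False by linarith
  qed
  then obtain xr where xr: "\<forall>g. linear g \<longrightarrow> L2 g = g xr"
    using linear_functional_eval_if_finite_support[OF lL2 F] by blast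
  have "\<Lambda> z = zdot (xr, L1) z" if "z \<in> Zset T" for z
  proof -
    obtain x g where z: "z = (x, g)" by (cases z)
    have "linear g" using that unfolding z Zset_def by (auto simp: dual_linear)
    have "\<Lambda> z = L1 x + L2 g"
      unfolding z L1_def L2_def using linear_add[OF \<Lambda>, of "(x, 0)" "(0, g)"] by simp
    then show ?thesis using xr \<open>linear g\<close> unfolding z zdot_def by simp
  qed
  moreover have "(xr, L1) \<in> Zset T" using L1 unfolding Zset_def by simp
  ultimately show ?thesis by blast
qed

lemma topspace_Ztop: "lcs T \<Longrightarrow> topspace (Ztop T) = Zset T"
  unfolding Ztop_def wstar_def Zset_def by (simp add: lcs_topspace)

lemma wstar_open_contains_box:
  assumes G: "openin (wstar T) G" and f0: "f0 \<in> G"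
  shows "\<exists>F \<delta>. finite F \<and> \<delta> > 0 \<and> (\<forall>g\<in>dual T. (\<forall>i\<in>F. \<bar>g i - f0 i\<bar> < \<delta>) \<longrightarrow> g \<in> G)"
proof -
  obtain G' where G': "openin (product_topology (\<lambda>_. euclideanreal) UNIV) G'" and GG': "G = G' \<inter> dual T"
    using G unfolding wstar_def openin_subtopology by blast
  obtain Xs where f0X: "f0 \<in> (\<Pi>\<^sub>E i\<in>UNIV. Xs i)" and oX: "\<forall>i. openin euclideanreal (Xs i)"
    and fin: "finite {i. Xs i \<noteq> topspace euclideanreal}" and XG: "(\<Pi>\<^sub>E i\<in>UNIV. Xs i) \<subseteq> G'"
    using product_topology_open_contains_basis[OF G'] f0 GG' by blast
  define F where "F = {i. Xs i \<noteq> UNIV}"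
  have F: "finite F" using fin unfolding F_def by simp
  have "\<exists>e>0. ball (f0 i) e \<subseteq> Xs i" for i
  proof -
    have "open (Xs i)" "f0 i \<in> Xs i" using oX f0X by auto
    then show ?thesis using openE by blast
  qed
  then obtain ee where ee: "\<forall>i. ee i > 0 \<and> ball (f0 i) (ee i) \<subseteq> Xs i" by metis
  define \<delta> where "\<delta> = Min (insert 1 (ee ` F))"
  have \<delta>: "\<delta> > 0" unfolding \<delta>_def using F ee by (subst Min_gr_iff) auto
  have \<delta>_le: "\<delta> \<le> ee i" if "i \<in> F" for i unfolding \<delta>_def using F that by (intro Min_le) auto
  have "g \<in> G" if g: "g \<in> dual T" "\<forall>i\<in>F. \<bar>g i - f0 i\<bar> < \<delta>" for g
  proof -
    have "g i \<in> Xs i" for i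
    proof (cases "i \<in> F")
      case True
      then have "\<bar>g i - f0 i\<bar> < ee i" using g(2) \<delta>_le[OF True] by fastforce
      then have "g i \<in> ball (f0 i) (ee i)" by (simp add: dist_real_def abs_minus_commute)
      then show ?thesis using ee by blast
    qed (simp add: F_def)
    then have "g \<in> (\<Pi>\<^sub>E i\<in>UNIV. Xs i)" by (simp add: PiE_iff)
    then show ?thesis using XG GG' g(1) by blast
  qed
  then show ?thesis using F \<delta> by blast
qed

lemma lcs_symmetric_convex_nbhd:
  assumes T: "lcs T" and U: "openin T U" "x0 \<in> U"
  shows "\<exists>V. openin T V \<and> convex V \<and> 0 \<in> V \<and> (\<forall>y\<in>V. - y \<in> V) \<and> (\<forall>y\<in>V. x0 + y \<in> U)"
proof -
  define V1 where "V1 = {y. y + x0 \<in> U}"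
  have "openin T V1" unfolding V1_def by (rule lcs_openin_preimage[OF T lcs_continuous_translation[OF T] U(1)])
  moreover have "0 \<in> V1" unfolding V1_def using U(2) by simp
  ultimately obtain V2 where V2: "openin T V2" "convex V2" "0 \<in> V2" "V2 \<subseteq> V1"
    using T unfolding lcs_def by blast
  define V where "V = V2 \<inter> {y. (-1) *\<^sub>R y \<in> V2}"
  have "openin T V" unfolding V_def
    by (intro openin_Int V2(1) lcs_openin_preimage[OF T lcs_continuous_scaling[OF T] V2(1)])
  moreover have "{y. (-1) *\<^sub>R y \<in> V2} = (\<lambda>y. (-1) *\<^sub>R y) ` V2" by (force simp: image_iff)
  then have "convex V" unfolding V_def using convex_negations[OF V2(2)] by (intro convex_Int V2(2)) simp
  moreover have "0 \<in> V" "\<forall>y\<in>V. - y \<in> V" unfolding V_def using V2(3) by auto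
  moreover have "\<forall>y\<in>V. x0 + y \<in> U" using V2(4) unfolding V_def V1_def by (auto simp: add.commute)
  ultimately show ?thesis by blast
qed

lemma lsc_Z_box_nbhd:
  assumes T: "lcs T" and lsc: "lsc_Z T h" and z0: "z0 \<in> Zset T" and r: "ereal r < h z0"
  shows "\<exists>V F \<delta>. openin T V \<and> convex V \<and> 0 \<in> V \<and> (\<forall>y\<in>V. - y \<in> V) \<and> finite F \<and> \<delta> > 0 \<and>
           (\<forall>w\<in>box_nbhd V F \<delta>. z0 + w \<in> Zset T \<longrightarrow> ereal r < h (z0 + w))"
proof -
  obtain x0 f0 where z0_eq: "z0 = (x0, f0)" by (cases z0)
  define S where "S = {z \<in> Zset T. ereal r < h z}"
  have "closedin (Ztop T) {z \<in> Zset T. h z \<le> ereal r}" using lsc unfolding lsc_Z_def by blast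
  then have "openin (Ztop T) (topspace (Ztop T) - {z \<in> Zset T. h z \<le> ereal r})" by blast
  moreover have "topspace (Ztop T) - {z \<in> Zset T. h z \<le> ereal r} = S"
    unfolding topspace_Ztop[OF T] S_def by (auto simp: not_le)
  ultimately have "openin (prod_topology T (wstar T)) S" unfolding Ztop_def by simp
  moreover have "(x0, f0) \<in> S" unfolding S_def using z0 r z0_eq by simp
  ultimately have "\<exists>U G. openin T U \<and> openin (wstar T) G \<and> x0 \<in> U \<and> f0 \<in> G \<and> U \<times> G \<subseteq> S"
    by (simp only: openin_prod_topology_alt)
  then obtain U G where U: "openin T U" "x0 \<in> U" and G: "openin (wstar T) G" "f0 \<in> G"
    and UG: "U \<times> G \<subseteq> S"
    by blast
  obtain V where V: "openin T V" "convex V" "0 \<in> V" "\<forall>y\<in>V. - y \<in> V" and VU: "\<forall>y\<in>V. x0 + y \<in> U"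
    using lcs_symmetric_convex_nbhd[OF T U] by blast
  obtain F \<delta> where F: "finite F" and \<delta>: "\<delta> > 0"
    and FG: "\<forall>g\<in>dual T. (\<forall>i\<in>F. \<bar>g i - f0 i\<bar> < \<delta>) \<longrightarrow> g \<in> G"
    using wstar_open_contains_box[OF G] by blast
  have "ereal r < h (z0 + w)" if w: "w \<in> box_nbhd V F \<delta>" "z0 + w \<in> Zset T" for w
  proof -
    have "f0 + snd w \<in> dual T"
      using w(2) unfolding z0_eq Zset_def by (simp add: mem_Times_iff)
    then have "f0 + snd w \<in> G" using FG w(1) unfolding box_nbhd_def by simp
    moreover have "x0 + fst w \<in> U" using VU w(1) unfolding box_nbhd_def by blast
    ultimately have "(x0 + fst w, f0 + snd w) \<in> S" using UG by blast
    moreover have "z0 + w = (x0 + fst w, f0 + snd w)" unfolding z0_eq by (simp add: prod_eq_iff)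
    ultimately show ?thesis unfolding S_def by simp
  qed
  then show ?thesis using V F \<delta> by (intro exI[of _ V] exI[of _ F] exI[of _ \<delta>]) simp
qed

section \<open>Affine minorants of lower semicontinuous convex functions\<close>

definition epigraph_Z :: "'a::real_vector topology \<Rightarrow> ('a \<times> ('a \<Rightarrow> real) \<Rightarrow> ereal)
    \<Rightarrow> (('a \<times> ('a \<Rightarrow> real)) \<times> real) set" where
  "epigraph_Z T h = {(z, s). z \<in> Zset T \<and> h z \<le> ereal s}"

lemma convex_epigraph_Z:
  assumes cvx: "convex_on_Z T h"
  shows "convex (epigraph_Z T h)"
  unfolding convex_def
proof (intro ballI allI impI)
  fix p q :: "('a \<times> ('a \<Rightarrow> real)) \<times> real" and u v :: real
  assume p: "p \<in> epigraph_Z T h" and q: "q \<in> epigraph_Z T h" and uv: "0 \<le> u" "0 \<le> v" "u + v = 1"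
  obtain z s z' s' where pq: "p = (z, s)" "q = (z', s')" by (cases p, cases q)
  have z: "z \<in> Zset T" "h z \<le> ereal s" and z': "z' \<in> Zset T" "h z' \<le> ereal s'"
    using p q unfolding pq epigraph_Z_def by auto
  have v: "v = 1 - u" using uv by simp
  have "h (zcomb u z z') \<le> ereal (u * s + (1 - u) * s')"
  proof -
    consider "u = 0" | "u = 1" | "0 < u \<and> u < 1" using uv by linarith
    then show ?thesis
    proof cases
      case 3
      have "h (zcomb u z z') \<le> ereal u * h z + ereal (1 - u) * h z'"
        using cvx z z' 3 unfolding convex_on_Z_def by blast
      also have "\<dots> \<le> ereal u * ereal s + ereal (1 - u) * ereal s'"
        using z z' 3 by (intro add_mono ereal_mult_left_mono) auto
      finally show ?thesis by simp
    qed (use z z' in \<open>simp_all add: zcomb_eq_lincomb\<close>)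
  qed
  moreover have "zcomb u z z' \<in> Zset T"
    unfolding zcomb_eq_lincomb using Zset_lincomb[OF z(1) z'(1)] .
  ultimately show "u *\<^sub>R p + v *\<^sub>R q \<in> epigraph_Z T h"
    unfolding pq v epigraph_Z_def by (simp add: zcomb_eq_lincomb)
qed

definition slab_below :: "'v::real_vector \<Rightarrow> 'v set \<Rightarrow> real \<Rightarrow> ('v \<times> real) set" where
  "slab_below z0 W r = {(z, s). z - z0 \<in> W \<and> s < r}"

lemma slab_below_eq_translation: "slab_below z0 W r = (+) (z0, 0) ` (W \<times> {..<r})"
proof (intro set_eqI iffI)
  fix p assume "p \<in> slab_below z0 W r"
  moreover have "p = (z0, 0) + (fst p - z0, snd p)" by simp
  ultimately show "p \<in> (+) (z0, 0) ` (W \<times> {..<r})"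
    unfolding slab_below_def by (intro image_eqI[of _ _ "(fst p - z0, snd p)"]) auto
qed (auto simp: slab_below_def)

lemma convex_slab_below: "convex W \<Longrightarrow> convex (slab_below z0 W r)"
  unfolding slab_below_eq_translation by (intro convex_translation convex_Times) simp_all

lemma slab_below_absorbing:
  assumes "\<exists>e>0. \<forall>t. \<bar>t\<bar> < e \<longrightarrow> t *\<^sub>R fst d \<in> W"
  shows "\<exists>t>0. (z0, r - 1) + t *\<^sub>R d \<in> slab_below z0 W r"
proof -
  obtain e where e: "e > 0" "\<forall>t. \<bar>t\<bar> < e \<longrightarrow> t *\<^sub>R fst d \<in> W" using assms by blast
  define t where "t = min (e / 2) (1 / (2 * (\<bar>snd d\<bar> + 1)))"
  have t: "t > 0" "t < e" unfolding t_def using e by auto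
  have "t * snd d \<le> t * \<bar>snd d\<bar>" using t by (simp add: mult_left_mono)
  also have "\<dots> \<le> (1 / (2 * (\<bar>snd d\<bar> + 1))) * \<bar>snd d\<bar>" unfolding t_def by (intro mult_right_mono) auto
  also have "\<dots> < 1" by (simp add: field_simps)
  finally have "r - 1 + t * snd d < r" by simp
  moreover have "(z0, r - 1) + t *\<^sub>R d = (z0 + t *\<^sub>R fst d, r - 1 + t * snd d)"
    by (simp add: prod_eq_iff)
  ultimately have "(z0, r - 1) + t *\<^sub>R d \<in> slab_below z0 W r"
    using e t unfolding slab_below_def by simp
  then show ?thesis using t by blast
qed

lemma linear_split_real_component:
  fixes \<Phi> :: "'v::real_vector \<times> real \<Rightarrow> real"
  assumes \<Phi>: "linear \<Phi>"
  shows "linear (\<lambda>z. \<Phi> (z, 0))" and "\<Phi> (z, s) = \<Phi> (z, 0) + s * \<Phi> (0, 1)"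
proof -
  show "linear (\<lambda>z. \<Phi> (z, 0))"
  proof (rule linearI)
    show "\<Phi> (x + y, 0) = \<Phi> (x, 0) + \<Phi> (y, 0)" for x y
      using linear_add[OF \<Phi>, of "(x, 0)" "(y, 0)"] by simp
    show "\<Phi> (c *\<^sub>R x, 0) = c *\<^sub>R \<Phi> (x, 0)" for c x
      using linear_scale[OF \<Phi>, of c "(x, 0)"] by simp
  qed
  have "(z, s) = (z, 0) + s *\<^sub>R (0, 1)" by simp
  then show "\<Phi> (z, s) = \<Phi> (z, 0) + s * \<Phi> (0, 1)"
    by (metis linear_add[OF \<Phi>] linear_scale[OF \<Phi>] real_scaleR_def)
qed

lemma epigraph_Z_separating_functional:
  fixes h :: "'a::real_vector \<times> ('a \<Rightarrow> real) \<Rightarrow> ereal"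
  assumes T: "lcs T" and hR: "h \<in> classR T" and z0: "z0 \<in> Zset T" and r: "ereal r < h z0"
  obtains V F \<delta> and \<Lambda> :: "'a \<times> ('a \<Rightarrow> real) \<Rightarrow> real" and z1 s1 \<beta>
  where "openin T V" "0 \<in> V" "\<forall>y\<in>V. - y \<in> V" "finite F" "\<delta> > 0" "linear \<Lambda>"
    "(z1, s1) \<in> epigraph_Z T h" "\<Lambda> z1 + s1 * \<beta> - (\<Lambda> z0 + (r - 1) * \<beta>) = 1"
    "\<And>w s' z s. w \<in> box_nbhd V F \<delta> \<Longrightarrow> s' < r \<Longrightarrow> (z, s) \<in> epigraph_Z T h
       \<Longrightarrow> \<Lambda> (z0 + w) + s' * \<beta> \<le> \<Lambda> z + s * \<beta>"
proof -
  have hC: "h \<in> classC T" and lsc: "lsc_Z T h" using hR unfolding classR_def by auto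
  then have cvx: "convex_on_Z T h" and "\<exists>z\<in>Zset T. h z \<noteq> \<infinity>"
    unfolding classC_def proper_on_def by auto
  then obtain z1 where "z1 \<in> Zset T" "h z1 \<noteq> \<infinity>" by blast
  moreover define s1 where "s1 = real_of_ereal (h z1)"
  moreover have "h z1 \<le> ereal s1" using \<open>h z1 \<noteq> \<infinity>\<close> unfolding s1_def by (cases "h z1") auto
  ultimately have z1: "(z1, s1) \<in> epigraph_Z T h" unfolding epigraph_Z_def by simp
  obtain V F \<delta> where V: "openin T V" "convex V" "0 \<in> V" "\<forall>y\<in>V. - y \<in> V"
    and F: "finite F" and \<delta>: "\<delta> > 0"
    and above: "\<forall>w\<in>box_nbhd V F \<delta>. z0 + w \<in> Zset T \<longrightarrow> ereal r < h (z0 + w)"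
    using lsc_Z_box_nbhd[OF T lsc z0 r] by blast
  let ?A = "slab_below z0 (box_nbhd V F \<delta>) r"
  have disj: "?A \<inter> epigraph_Z T h = {}"
  proof -
    have False if "(z, s) \<in> ?A" "(z, s) \<in> epigraph_Z T h" for z s
    proof -
      have "z - z0 \<in> box_nbhd V F \<delta>" "s < r" "z \<in> Zset T" "h z \<le> ereal s"
        using that unfolding slab_below_def epigraph_Z_def by auto
      moreover have "z0 + (z - z0) = z" by simp
      ultimately have "ereal r < h z" using above by metis
      then have "ereal r < ereal s" using \<open>h z \<le> ereal s\<close> by (rule less_le_trans)
      then show False using \<open>s < r\<close> by simp
    qed
    then show ?thesis by auto
  qed
  have a0: "(z0, r - 1) \<in> ?A" using zero_in_box_nbhd[OF V(3) \<delta>] unfolding slab_below_def by simp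
  obtain \<Phi> :: "('a \<times> ('a \<Rightarrow> real)) \<times> real \<Rightarrow> real" where
    \<Phi>: "linear \<Phi>" and \<Phi>1: "\<Phi> (z1, s1) - \<Phi> (z0, r - 1) = 1"
    and sep: "\<forall>a\<in>?A. \<forall>b\<in>epigraph_Z T h. \<Phi> a \<le> \<Phi> b"
    using convex_sets_separation[OF convex_slab_below[OF convex_box_nbhd[OF V(2)]]
        convex_epigraph_Z[OF cvx] disj a0 z1 slab_below_absorbing[OF box_nbhd_absorbing[OF T V(1,3) F \<delta>]]]
    by blast
  define \<Lambda> where "\<Lambda> z = \<Phi> (z, 0)" for z
  define \<beta> where "\<beta> = \<Phi> (0, 1)"
  have \<Phi>_eq: "\<Phi> (z, s) = \<Lambda> z + s * \<beta>" for z s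
    unfolding \<Lambda>_def \<beta>_def by (rule linear_split_real_component(2)[OF \<Phi>])
  have lin: "linear \<Lambda>" unfolding \<Lambda>_def by (rule linear_split_real_component(1)[OF \<Phi>])
  have gap: "\<Lambda> z1 + s1 * \<beta> - (\<Lambda> z0 + (r - 1) * \<beta>) = 1"
    using \<Phi>1 unfolding \<Phi>_eq .
  have sep\<Lambda>: "\<Lambda> (z0 + w) + s' * \<beta> \<le> \<Lambda> z + s * \<beta>"
    if "w \<in> box_nbhd V F \<delta>" "s' < r" "(z, s) \<in> epigraph_Z T h" for w s' z s
  proof -
    have "(z0 + w, s') \<in> ?A" using that unfolding slab_below_def by simp
    then show ?thesis using sep that(3) unfolding \<Phi>_eq[symmetric] by blast
  qed
  from that[OF V(1,3,4) F \<delta> lin z1 gap sep\<Lambda>] show ?thesis .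
qed

lemma epigraph_Z_separation:
  fixes h :: "'a::real_vector \<times> ('a \<Rightarrow> real) \<Rightarrow> ereal"
  assumes T: "lcs T" and hR: "h \<in> classR T" and z0: "z0 \<in> Zset T" and r: "ereal r < h z0"
  shows "\<exists>u\<in>Zset T. \<exists>\<beta>\<ge>0. (\<forall>(z, s)\<in>epigraph_Z T h. zdot u z0 + \<beta> * r \<le> zdot u z + \<beta> * s)
           \<and> (\<beta> = 0 \<longrightarrow> (\<exists>t>0. \<forall>(z, s)\<in>epigraph_Z T h. zdot u z0 + t \<le> zdot u z))"
proof -
  obtain V F \<delta> and \<Lambda> :: "'a \<times> ('a \<Rightarrow> real) \<Rightarrow> real" and z1 s1 \<beta>
    where V: "openin T V" "0 \<in> V" "\<forall>y\<in>V. - y \<in> V" and F: "finite F" and \<delta>: "\<delta> > 0"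
      and \<Lambda>: "linear \<Lambda>" and z1: "(z1, s1) \<in> epigraph_Z T h"
      and gap: "\<Lambda> z1 + s1 * \<beta> - (\<Lambda> z0 + (r - 1) * \<beta>) = 1"
      and sep: "\<And>w s' z s. w \<in> box_nbhd V F \<delta> \<Longrightarrow> s' < r \<Longrightarrow> (z, s) \<in> epigraph_Z T h
                  \<Longrightarrow> \<Lambda> (z0 + w) + s' * \<beta> \<le> \<Lambda> z + s * \<beta>"
    using epigraph_Z_separating_functional[OF T hR z0 r] by blast
  have sep0: "\<Lambda> z0 + s' * \<beta> \<le> \<Lambda> z + s * \<beta>" if "s' < r" "(z, s) \<in> epigraph_Z T h" for s' z s
    using sep[OF zero_in_box_nbhd[OF V(2) \<delta>] that] by simp
  have "\<beta> \<ge> 0"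
  proof (rule ccontr)
    assume "\<not> \<beta> \<ge> 0"
    then have "(z1, s1 + 2 / (- \<beta>)) \<in> epigraph_Z T h"
      using z1 unfolding epigraph_Z_def by (auto intro: order_trans)
    then have "\<Lambda> z0 + (r - 1) * \<beta> \<le> \<Lambda> z1 + (s1 + 2 / (- \<beta>)) * \<beta>" by (intro sep0) auto
    moreover have "(s1 + 2 / (- \<beta>)) * \<beta> = s1 * \<beta> - 2" using \<open>\<not> \<beta> \<ge> 0\<close> by (simp add: field_simps)
    ultimately show False using gap by linarith
  qed
  have "\<Lambda> w \<le> 1" if "w \<in> box_nbhd V F \<delta>" for w
    using sep[OF that _ z1, of "r - 1"] gap by (simp add: linear_add[OF \<Lambda>])
  then obtain u where u: "u \<in> Zset T" and \<Lambda>_eq: "\<forall>z\<in>Zset T. \<Lambda> z = zdot u z"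
    using Z_dual_representation[OF T \<Lambda> V F \<delta>] by blast
  have "zdot u z0 + \<beta> * r \<le> zdot u z + \<beta> * s" if zs: "(z, s) \<in> epigraph_Z T h" for z s
  proof -
    have "\<Lambda> z0 + r * \<beta> \<le> \<Lambda> z + s * \<beta>"
    proof (cases "\<beta> = 0")
      case True then show ?thesis using sep0[OF _ zs, of "r - 1"] by simp
    next
      case False
      then have "\<beta> > 0" using \<open>\<beta> \<ge> 0\<close> by simp
      have "r \<le> (\<Lambda> z + s * \<beta> - \<Lambda> z0) / \<beta>"
      proof (rule dense_le)
        fix x assume "x < r"
        then show "x \<le> (\<Lambda> z + s * \<beta> - \<Lambda> z0) / \<beta>"
          using sep0[OF \<open>x < r\<close> zs] \<open>\<beta> > 0\<close> by (simp add: pos_le_divide_eq)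
      qed
      then show ?thesis using \<open>\<beta> > 0\<close> by (simp add: pos_le_divide_eq)
    qed
    moreover have "z \<in> Zset T" using zs unfolding epigraph_Z_def by simp
    ultimately show ?thesis using \<Lambda>_eq z0 by (simp add: mult.commute)
  qed
  moreover have "\<exists>t>0. \<forall>(z, s)\<in>epigraph_Z T h. zdot u z0 + t \<le> zdot u z" if "\<beta> = 0"
  proof -
    \<comment> \<open>A vertical hyperplane: it strictly separates z0 from the domain of h.\<close>
    obtain e where e: "e > 0" "\<forall>t. \<bar>t\<bar> < e \<longrightarrow> t *\<^sub>R (z1 - z0) \<in> box_nbhd V F \<delta>"
      using box_nbhd_absorbing[OF T V(1,2) F \<delta>] by blast
    have "\<Lambda> z0 + e / 2 \<le> \<Lambda> z" if "(z, s) \<in> epigraph_Z T h" for z s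
    proof -
      have "\<Lambda> (z0 + (e / 2) *\<^sub>R (z1 - z0)) \<le> \<Lambda> z"
        using sep[OF _ _ that, of _ "r - 1"] e \<open>\<beta> = 0\<close> by simp
      then show ?thesis using gap \<open>\<beta> = 0\<close> by (simp add: linear_add[OF \<Lambda>] linear_scale[OF \<Lambda>] linear_diff[OF \<Lambda>])
    qed
    moreover have "z \<in> Zset T" if "(z, s) \<in> epigraph_Z T h" for z s
      using that unfolding epigraph_Z_def by simp
    ultimately show ?thesis using \<Lambda>_eq z0 e(1) by (intro exI[of _ "e / 2"]) auto
  qed
  ultimately show ?thesis using u \<open>\<beta> \<ge> 0\<close> by blast
qed

lemma affine_minorant_if_below_epigraph:
  assumes "\<forall>z\<in>Zset T. h z \<noteq> - \<infinity>" and "\<forall>(z, s)\<in>epigraph_Z T h. zdot v z + a \<le> s"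
  shows "\<forall>z\<in>Zset T. ereal (zdot v z + a) \<le> h z"
proof
  fix z assume z: "z \<in> Zset T"
  show "ereal (zdot v z + a) \<le> h z"
  proof (cases "h z")
    case (real s)
    then have "(z, s) \<in> epigraph_Z T h" using z unfolding epigraph_Z_def by simp
    then show ?thesis using assms(2) real by auto
  qed (use assms(1) z in auto)
qed

lemma exists_affine_minorant_above:
  assumes T: "lcs T" and hR: "h \<in> classR T" and z0: "z0 \<in> Zset T"
    and u0: "u0 \<in> Zset T" and m0: "\<forall>z\<in>Zset T. ereal (zdot u0 z + a0) \<le> h z"
    and \<gamma>: "ereal \<gamma> < h z0"
  shows "\<exists>u\<in>Zset T. \<exists>a. (\<forall>z\<in>Zset T. ereal (zdot u z + a) \<le> h z) \<and> \<gamma> < zdot u z0 + a"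
proof -
  obtain r where r: "\<gamma> < r" "ereal r < h z0" using ereal_dense2[OF \<gamma>] by auto
  obtain u \<beta> where u: "u \<in> Zset T" and "\<beta> \<ge> 0"
    and nonvertical: "\<forall>(z, s)\<in>epigraph_Z T h. zdot u z0 + \<beta> * r \<le> zdot u z + \<beta> * s"
    and vertical: "\<beta> = 0 \<Longrightarrow> \<exists>t>0. \<forall>(z, s)\<in>epigraph_Z T h. zdot u z0 + t \<le> zdot u z"
    using epigraph_Z_separation[OF T hR z0 r(2)] by blast
  have finite_below: "\<forall>z\<in>Zset T. h z \<noteq> - \<infinity>" using m0 by force
  show ?thesis
  proof (cases "\<beta> = 0")
    case False
    then have "\<beta> > 0" using \<open>\<beta> \<ge> 0\<close> by simp
    define a where "a = r + zdot u z0 / \<beta>"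
    have "zdot ((- 1 / \<beta>) *\<^sub>R u) z + a \<le> s" if zs: "(z, s) \<in> epigraph_Z T h" for z s
    proof -
      have "z \<in> Zset T" using zs unfolding epigraph_Z_def by simp
      have "0 \<le> ((zdot u z + \<beta> * s) - (zdot u z0 + \<beta> * r)) / \<beta>"
        using nonvertical zs \<open>\<beta> > 0\<close> by auto
      moreover have "zdot ((- 1 / \<beta>) *\<^sub>R u) z + a
                       = s - ((zdot u z + \<beta> * s) - (zdot u z0 + \<beta> * r)) / \<beta>"
        unfolding a_def zdot_scaleR[OF \<open>z \<in> Zset T\<close>] using \<open>\<beta> > 0\<close> by (simp add: field_simps)
      ultimately show ?thesis by linarith
    qed
    then have "\<forall>z\<in>Zset T. ereal (zdot ((- 1 / \<beta>) *\<^sub>R u) z + a) \<le> h z"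
      using affine_minorant_if_below_epigraph[OF finite_below] by blast
    moreover have "\<gamma> < zdot ((- 1 / \<beta>) *\<^sub>R u) z0 + a"
      unfolding a_def zdot_scaleR[OF z0] using r(1) \<open>\<beta> > 0\<close> by simp
    ultimately show ?thesis using Zset_scaleR[OF u] by blast
  next
    case True
    then obtain t where t: "t > 0" and sep: "\<forall>(z, s)\<in>epigraph_Z T h. zdot u z0 + t \<le> zdot u z"
      using vertical by blast
    \<comment> \<open>Tilt the given minorant along u, steeply enough to pass above \<gamma> at z0.\<close>
    define k where "k = (\<bar>\<gamma> - (zdot u0 z0 + a0)\<bar> + 1) / t"
    define a where "a = a0 + k * (t + zdot u z0)"
    have k: "k \<ge> 0" "k * t = \<bar>\<gamma> - (zdot u0 z0 + a0)\<bar> + 1" unfolding k_def using t by auto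
    have "zdot (1 *\<^sub>R u0 + (- k) *\<^sub>R u) z + a \<le> s" if zs: "(z, s) \<in> epigraph_Z T h" for z s
    proof -
      have z: "z \<in> Zset T" and "h z \<le> ereal s" using zs unfolding epigraph_Z_def by auto
      then have "zdot u0 z + a0 \<le> s" using m0 order_trans ereal_less_eq(3) by blast
      moreover have "k * (t + zdot u z0 - zdot u z) \<le> 0"
        using sep zs k(1) by (auto simp: mult_nonneg_nonpos)
      ultimately show ?thesis unfolding a_def zdot_lincomb[OF z] by (simp add: algebra_simps)
    qed
    then have "\<forall>z\<in>Zset T. ereal (zdot (1 *\<^sub>R u0 + (- k) *\<^sub>R u) z + a) \<le> h z"
      using affine_minorant_if_below_epigraph[OF finite_below] by blast
    moreover have "\<gamma> < zdot (1 *\<^sub>R u0 + (- k) *\<^sub>R u) z0 + a"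
      unfolding a_def zdot_lincomb[OF z0] using k(2) by (simp add: algebra_simps)
    ultimately show ?thesis using Zset_lincomb[OF u0 u] by blast
  qed
qed

lemma eq_cpl_if_sqconj_eq_cpl:
  assumes T: "lcs T" and hD: "h \<in> classD T" and z: "z \<in> Zset T"
    and sq: "sqconj T h z = ereal (cpl z)"
  shows "h z = ereal (cpl z)"
proof (rule ccontr)
  assume ne: "h z \<noteq> ereal (cpl z)"
  have hR: "h \<in> classR T" using hD unfolding classD_def by simp
  then have "ereal (cpl z) \<le> h z" using z unfolding classR_def classC_def by auto
  with ne have gt: "ereal (cpl z) < h z" by simp
  have l: "\<forall>z'\<in>Zset T. ereal (zdot z z' - cpl z) \<le> h z'"
    using affine_minorant_if_sqconj_le[of _ T h z] sq by simp
  then have "\<forall>z'\<in>Zset T. ereal (zdot z z' + - cpl z) \<le> h z'" by simp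
  then obtain u a where "u \<in> Zset T" and m: "\<forall>z'\<in>Zset T. ereal (zdot u z' + a) \<le> h z'"
    and "cpl z < zdot u z + a"
    using exists_affine_minorant_above[OF T hR z z _ gt] by blast
  moreover have "zdot u z + a \<le> cpl z"
    using classD_affine_minorant_le_cpl[OF hD z \<open>u \<in> Zset T\<close> l m] .
  ultimately show False by simp
qed

theorem lemma1p1:
  fixes T :: "'a::real_vector topology"
    and h :: "'a \<times> ('a \<Rightarrow> real) \<Rightarrow> ereal"
  assumes "lcs T"
    and "\<exists>x::'a. x \<noteq> 0"
    and "h \<in> classC T"
  shows "eqset T h (\<lambda>z. ereal (cpl z)) \<subseteq> eqset T (sqconj T h) (\<lambda>z. ereal (cpl z))
         \<and> (h \<in> classD T \<longrightarrow>
              eqset T h (\<lambda>z. ereal (cpl z)) = eqset T (sqconj T h) (\<lambda>z. ereal (cpl z)))"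
proof -
  have "eqset T h (\<lambda>z. ereal (cpl z)) \<subseteq> eqset T (sqconj T h) (\<lambda>z. ereal (cpl z))"
    unfolding eqset_def using sqconj_eq_cpl_if_eq_cpl[OF assms(3)] by auto
  moreover have "eqset T (sqconj T h) (\<lambda>z. ereal (cpl z)) \<subseteq> eqset T h (\<lambda>z. ereal (cpl z))"
    if "h \<in> classD T"
    unfolding eqset_def using eq_cpl_if_sqconj_eq_cpl[OF assms(1) that] by auto
  ultimately show ?thesis by blast
qed

end
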